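(* In the setting described in the context, the vector fields $F_1,F_2$ on $S\setminus\Gamma(S)$ satisfy $$[F_1,F_2]=-\big(b\,h(F_1)+\eta(F_1)\big)F_1-b\,F_2 .$$
   Context: $M$ is a three-dimensional manifold with contact distribution $D=\ker\omega$ ($\omega\wedge{\mathrm d}\omega\ne0$) and smooth fibre inner product $g$ on $D$, with ${\mathrm d}\omega|_D=-\operatorname{vol}_g$. $X_0$ is the Reeb vector field (${\mathrm d}\omega(X_0,\cdot)\equiv0$, $\omega(X_0)\equiv1$), $(X_1,X_2)$ a global oriented $g$-orthonormal frame of $D$; then $[X_0,X_i]\in D$ for $i=1,2$. $S=\{u=0\}$ with $u\in C^2(M)$, ${\mathrm d}u\ne0$ on $S$; $\Gamma(S)=\{x\in S:(X_1u)(x)=(X_2u)(x)=0\}$. On $S\setminus\Gamma(S)$ define $F_1=\dfrac{(X_2u)X_1-(X_1u)X_2}{\sqrt{(X_1u)^2+(X_2u)^2}}$, $F_2=\dfrac{(X_0u)(X_1u)X_1+(X_0u)(X_2u)X_2}{(X_1u)^2+(X_2u)^2}-X_0$, and $b=\dfrac{X_0u}{\sqrt{(X_1u)^2+(X_2u)^2}}$. Let $J\colon D\to D$ be defined by $g(X,J(Y))={\mathrm d}\omega(X,Y)$ for $X,Y\in D$ (so $J(X_1)=X_2$, $J(X_2)=-X_1$). For a unit-length vector field $X$ in $D$ set $h(X)=-g([X,J(X)]|_D,X)$, where $[X,J(X)]|_D$ is the $D$-component of $[X,J(X)]$ in the splitting $TM=D\oplus\mathbb{R}X_0$, and $\eta(X)=-g([X_0,X],X)$.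 *)

theory Defs
  imports "HOL-Analysis.Analysis"
begin

text \<open>Local-coordinate model: the 3-manifold M is an open set U of real^3.
Vector fields are maps real^3 => real^3, 1-forms are covector fields
(omega_x(v) = w x \<bullet> v).\<close>

type_synonym pt = "real^3"

definition pd :: "3 \<Rightarrow> (pt \<Rightarrow> real) \<Rightarrow> pt \<Rightarrow> real" where
  "pd i f x = frechet_derivative f (at x) (axis i 1)"

primrec Ck_on :: "nat \<Rightarrow> pt set \<Rightarrow> (pt \<Rightarrow> real) \<Rightarrow> bool" where
  "Ck_on 0 U f = continuous_on U f"
| "Ck_on (Suc k) U f = ((\<forall>x\<in>U. f differentiable (at x)) \<and> (\<forall>i. Ck_on k U (pd i f)))"

definition smooth_fun :: "pt set \<Rightarrow> (pt \<Rightarrow> real) \<Rightarrow> bool" where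
  "smooth_fun U f = (\<forall>k. Ck_on k U f)"

definition smooth_vf :: "pt set \<Rightarrow> (pt \<Rightarrow> pt) \<Rightarrow> bool" where
  "smooth_vf U X = (\<forall>j. smooth_fun U (\<lambda>x. X x $ j))"

definition dder :: "(pt \<Rightarrow> pt) \<Rightarrow> (pt \<Rightarrow> real) \<Rightarrow> pt \<Rightarrow> real" where
  "dder X f x = frechet_derivative f (at x) (X x)"

text \<open>Lie bracket [X,Y] (so that [X,Y]f = X(Yf) - Y(Xf)).\<close>
definition lie :: "(pt \<Rightarrow> pt) \<Rightarrow> (pt \<Rightarrow> pt) \<Rightarrow> pt \<Rightarrow> pt" where
  "lie X Y x = frechet_derivative Y (at x) (X x) - frechet_derivative X (at x) (Y x)"

definition dform :: "(pt \<Rightarrow> pt) \<Rightarrow> pt \<Rightarrow> pt \<Rightarrow> pt \<Rightarrow> real" where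
  "dform w x a b = (frechet_derivative w (at x) a) \<bullet> b - (frechet_derivative w (at x) b) \<bullet> a"

definition wedge3 :: "(pt \<Rightarrow> pt) \<Rightarrow> pt \<Rightarrow> pt \<Rightarrow> pt \<Rightarrow> pt \<Rightarrow> real" where
  "wedge3 w x a b c = (w x \<bullet> a) * dform w x b c - (w x \<bullet> b) * dform w x a c
                      + (w x \<bullet> c) * dform w x a b"

definition Dfib :: "(pt \<Rightarrow> pt) \<Rightarrow> pt \<Rightarrow> pt set" where
  "Dfib w x = {v. w x \<bullet> v = 0}"

definition Jmap :: "(pt \<Rightarrow> pt) \<Rightarrow> (pt \<Rightarrow> pt \<Rightarrow> pt \<Rightarrow> real) \<Rightarrow> pt \<Rightarrow> pt \<Rightarrow> pt" where
  "Jmap w g x a = (THE c. c \<in> Dfib w x \<and> (\<forall>v\<in>Dfib w x. g x v c = dform w x v a))"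

definition projD :: "(pt \<Rightarrow> pt) \<Rightarrow> (pt \<Rightarrow> pt) \<Rightarrow> pt \<Rightarrow> pt \<Rightarrow> pt" where
  "projD w X0 x v = v - (w x \<bullet> v) *\<^sub>R X0 x"

definition hfun :: "(pt \<Rightarrow> pt) \<Rightarrow> (pt \<Rightarrow> pt \<Rightarrow> pt \<Rightarrow> real) \<Rightarrow> (pt \<Rightarrow> pt) \<Rightarrow> (pt \<Rightarrow> pt) \<Rightarrow> pt \<Rightarrow> real" where
  "hfun w g X0 X x = - g x (projD w X0 x (lie X (\<lambda>y. Jmap w g y (X y)) x)) (X x)"

definition etafun :: "(pt \<Rightarrow> pt \<Rightarrow> pt \<Rightarrow> real) \<Rightarrow> (pt \<Rightarrow> pt) \<Rightarrow> (pt \<Rightarrow> pt) \<Rightarrow> pt \<Rightarrow> real" where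
  "etafun g X0 X x = - g x (lie X0 X x) (X x)"

definition volg :: "(pt \<Rightarrow> pt \<Rightarrow> pt \<Rightarrow> real) \<Rightarrow> (pt \<Rightarrow> pt) \<Rightarrow> (pt \<Rightarrow> pt) \<Rightarrow> pt \<Rightarrow> pt \<Rightarrow> pt \<Rightarrow> real" where
  "volg g X1 X2 x a b = g x a (X1 x) * g x b (X2 x) - g x a (X2 x) * g x b (X1 x)"

definition F1fld :: "(pt \<Rightarrow> pt) \<Rightarrow> (pt \<Rightarrow> pt) \<Rightarrow> (pt \<Rightarrow> real) \<Rightarrow> pt \<Rightarrow> pt" where
  "F1fld X1 X2 u x = (1 / sqrt ((dder X1 u x)\<^sup>2 + (dder X2 u x)\<^sup>2)) *\<^sub>R
      (dder X2 u x *\<^sub>R X1 x - dder X1 u x *\<^sub>R X2 x)"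

definition F2fld :: "(pt \<Rightarrow> pt) \<Rightarrow> (pt \<Rightarrow> pt) \<Rightarrow> (pt \<Rightarrow> pt) \<Rightarrow> (pt \<Rightarrow> real) \<Rightarrow> pt \<Rightarrow> pt" where
  "F2fld X0 X1 X2 u x = (1 / ((dder X1 u x)\<^sup>2 + (dder X2 u x)\<^sup>2)) *\<^sub>R
      ((dder X0 u x * dder X1 u x) *\<^sub>R X1 x + (dder X0 u x * dder X2 u x) *\<^sub>R X2 x) - X0 x"

definition bfun :: "(pt \<Rightarrow> pt) \<Rightarrow> (pt \<Rightarrow> pt) \<Rightarrow> (pt \<Rightarrow> pt) \<Rightarrow> (pt \<Rightarrow> real) \<Rightarrow> pt \<Rightarrow> real" where
  "bfun X0 X1 X2 u x = dder X0 u x / sqrt ((dder X1 u x)\<^sup>2 + (dder X2 u x)\<^sup>2)"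

end

theory Submission
  imports Defs
begin

text \<open>
  Both \<open>F\<^sub>1\<close> and \<open>F\<^sub>2\<close> are tangent to the level sets of \<open>u\<close>: \<open>F\<^sub>1 u = 0\<close> everywhere and
  \<open>F\<^sub>2 u = 0\<close> off the closed set \<open>\<Gamma>\<close>, so on a neighbourhood of \<open>p\<close>; by the symmetry of second
  derivatives \<open>du([F\<^sub>1,F\<^sub>2]) = 0\<close>. With the horizontal unit normal \<open>\<nu> = J F\<^sub>1\<close> we have
  \<open>F\<^sub>2 = b \<nu> - X\<^sub>0\<close>, hence \<open>[F\<^sub>1,F\<^sub>2] = b [F\<^sub>1,\<nu>] + (F\<^sub>1 b) \<nu> + [X\<^sub>0,F\<^sub>1]\<close>. Cartan's formula gives
  \<open>\<omega>([F\<^sub>1,\<nu>]) = vol(F\<^sub>1,\<nu>) = 1\<close> and \<open>\<omega>([X\<^sub>0,F\<^sub>1]) = 0\<close>, so \<open>[F\<^sub>1,\<nu>] - X\<^sub>0\<close> and \<open>[X\<^sub>0,F\<^sub>1]\<close> are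
  horizontal, with \<open>F\<^sub>1\<close>-components \<open>-h(F\<^sub>1)\<close> and \<open>-\<eta>(F\<^sub>1)\<close>. Therefore the difference of the two sides
  of the identity is horizontal, \<open>g\<close>-orthogonal to \<open>F\<^sub>1\<close> and annihilated by \<open>du\<close>; off \<open>\<Gamma>\<close> the line
  \<open>D \<inter> ker du\<close> is spanned by \<open>F\<^sub>1\<close>, so the difference vanishes.
\<close>

section \<open>Derivatives along vector fields\<close>

lemma frechet_derivative_cong_open:
  assumes "open S" "x \<in> S" "\<And>y. y \<in> S \<Longrightarrow> f y = g y"
  shows "frechet_derivative f (at x) = frechet_derivative g (at x)"
proof -
  have "(f has_derivative D) (at x) \<longleftrightarrow> (g has_derivative D) (at x)" for D
  proof
    assume "(f has_derivative D) (at x)"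
    then show "(g has_derivative D) (at x)"
      by (rule has_derivative_transform_within_open[OF _ assms(1,2)]) (simp add: assms(3))
  next
    assume "(g has_derivative D) (at x)"
    then show "(f has_derivative D) (at x)"
      by (rule has_derivative_transform_within_open[OF _ assms(1,2)]) (simp add: assms(3))
  qed
  then show ?thesis unfolding frechet_derivative_def by simp
qed

lemma frechet_derivative_locally_const:
  assumes "open S" "x \<in> S" "\<And>y. y \<in> S \<Longrightarrow> f y = k"
  shows "frechet_derivative f (at x) = (\<lambda>v. 0)"
  using frechet_derivative_cong_open[OF assms] by simp

lemma frechet_derivative_diff_at:
  assumes "f differentiable at x" "g differentiable at x"
  shows "frechet_derivative (\<lambda>y. f y - g y) (at x) v
    = frechet_derivative f (at x) v - frechet_derivative g (at x) v"
proof -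
  have "((\<lambda>y. f y - g y) has_derivative
      (\<lambda>v. frechet_derivative f (at x) v - frechet_derivative g (at x) v)) (at x)"
    using assms by (intro has_derivative_diff) (simp_all add: frechet_derivative_works[symmetric])
  from frechet_derivative_at[OF this] show ?thesis by metis
qed

lemma frechet_derivative_scaleR_at:
  fixes f :: "'a::real_normed_vector \<Rightarrow> real"
  assumes "f differentiable at x" "g differentiable at x"
  shows "frechet_derivative (\<lambda>y. f y *\<^sub>R g y) (at x) v
    = f x *\<^sub>R frechet_derivative g (at x) v + frechet_derivative f (at x) v *\<^sub>R g x"
proof -
  have "((\<lambda>y. f y *\<^sub>R g y) has_derivative (\<lambda>v. f x *\<^sub>R frechet_derivative g (at x) v
      + frechet_derivative f (at x) v *\<^sub>R g x)) (at x)"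
    using assms by (intro has_derivative_scaleR) (simp_all add: frechet_derivative_works[symmetric])
  from frechet_derivative_at[OF this] show ?thesis by metis
qed

lemma frechet_derivative_inner_at:
  fixes f g :: "'a::real_normed_vector \<Rightarrow> 'b::real_inner"
  assumes "f differentiable at x" "g differentiable at x"
  shows "frechet_derivative (\<lambda>y. f y \<bullet> g y) (at x) v
    = f x \<bullet> frechet_derivative g (at x) v + frechet_derivative f (at x) v \<bullet> g x"
proof -
  have "((\<lambda>y. f y \<bullet> g y) has_derivative (\<lambda>v. f x \<bullet> frechet_derivative g (at x) v
      + frechet_derivative f (at x) v \<bullet> g x)) (at x)"
    using assms by (intro has_derivative_inner) (simp_all add: frechet_derivative_works[symmetric])
  from frechet_derivative_at[OF this] show ?thesis by metis
qed

lemma lie_skew: "lie X Y p = - lie Y X p"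
  by (simp add: lie_def)

lemma lie_diff_right:
  assumes "X differentiable at p" "Y differentiable at p" "Z differentiable at p"
  shows "lie X (\<lambda>y. Y y - Z y) p = lie X Y p - lie X Z p"
  using assms linear_frechet_derivative[OF assms(1)]
  by (simp add: lie_def frechet_derivative_diff_at linear_diff)

lemma lie_scaleR_right:
  assumes "X differentiable at p" "f differentiable at p" "Y differentiable at p"
  shows "lie X (\<lambda>y. f y *\<^sub>R Y y) p = f p *\<^sub>R lie X Y p + dder X f p *\<^sub>R Y p"
  using assms linear_frechet_derivative[OF assms(1)]
  by (simp add: lie_def dder_def frechet_derivative_scaleR_at linear_scale algebra_simps)

text \<open>Cartan's formula \<open>d\<omega>(X,Y) = X \<omega>(Y) - Y \<omega>(X) - \<omega>([X,Y])\<close> for fields of constant \<open>\<omega>\<close>-value.\<close>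
lemma inner_lie_eq_neg_dform:
  assumes "open S" "p \<in> S" and w: "w differentiable at p"
    and X: "X differentiable at p" and Y: "Y differentiable at p"
    and "\<And>y. y \<in> S \<Longrightarrow> w y \<bullet> X y = k" "\<And>y. y \<in> S \<Longrightarrow> w y \<bullet> Y y = l"
  shows "w p \<bullet> lie X Y p = - dform w p (X p) (Y p)"
proof -
  have "w p \<bullet> frechet_derivative X (at p) v = - (frechet_derivative w (at p) v \<bullet> X p)"
   and "w p \<bullet> frechet_derivative Y (at p) v = - (frechet_derivative w (at p) v \<bullet> Y p)" for v
    using frechet_derivative_inner_at[OF w X, of v] frechet_derivative_inner_at[OF w Y, of v]
      frechet_derivative_locally_const[OF assms(1,2,6)]
      frechet_derivative_locally_const[OF assms(1,2,7)] by auto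
  then show ?thesis
    by (simp add: lie_def dform_def inner_diff_right inner_commute)
qed

lemma smooth_vf_differentiable:
  assumes "smooth_vf U X" "x \<in> U"
  shows "X differentiable at x"
proof -
  have "(\<lambda>y. X y $ j) differentiable at x" for j
    using assms unfolding smooth_vf_def smooth_fun_def by (metis Ck_on.simps(2))
  then show ?thesis
    unfolding differentiable_componentwise_within[where f=X]
    by (auto simp: Basis_vec_def cart_eq_inner_axis[symmetric])
qed

lemma Ck_on_2_D:
  assumes "Ck_on 2 U u" "x \<in> U"
  shows "u differentiable at x" "pd i u differentiable at x"
  using assms by (simp_all add: numeral_2_eq_2)

lemma Ck_on_2_isCont_pd_pd:
  assumes "Ck_on 2 U u" "open U" "x \<in> U"
  shows "isCont (pd j (pd i u)) x"
  using assms by (simp add: numeral_2_eq_2 continuous_on_eq_continuous_at)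

section \<open>Symmetry of second derivatives\<close>

lemma has_real_derivative_along_line:
  fixes f :: "'a::real_normed_vector \<Rightarrow> real"
  assumes "f differentiable at (q + s *\<^sub>R e)"
  shows "((\<lambda>t. f (q + t *\<^sub>R e)) has_real_derivative frechet_derivative f (at (q + s *\<^sub>R e)) e) (at s)"
proof -
  let ?Df = "frechet_derivative f (at (q + s *\<^sub>R e))"
  have "((\<lambda>t. q + t *\<^sub>R e) has_derivative (\<lambda>h. h *\<^sub>R e)) (at s)"
    by (auto intro!: derivative_eq_intros)
  from diff_chain_at[OF this assms[unfolded frechet_derivative_works]]
  have "((\<lambda>t. f (q + t *\<^sub>R e)) has_derivative (\<lambda>h. ?Df (h *\<^sub>R e))) (at s)"
    by (simp add: o_def)
  moreover have "(\<lambda>h. ?Df (h *\<^sub>R e)) = (*) (?Df e)"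
    using linear_frechet_derivative[OF assms] by (auto simp: fun_eq_iff linear_scale)
  ultimately show ?thesis by (simp add: has_field_derivative_def)
qed

lemma second_difference_mean_value:
  fixes u :: "pt \<Rightarrow> real" and i j :: 3
  assumes C2: "Ck_on 2 U u" and t: "t > 0" and ball: "cball p (2 * t) \<subseteq> U"
  defines "ei \<equiv> axis i 1" and "ej \<equiv> axis j 1"
  shows "\<exists>q. dist q p \<le> 2 * t \<and>
    u (p + t *\<^sub>R ei + t *\<^sub>R ej) - u (p + t *\<^sub>R ei) - u (p + t *\<^sub>R ej) + u p = t\<^sup>2 * pd j (pd i u) q"
proof -
  have near: "dist (p + s *\<^sub>R ei + r *\<^sub>R ej) p \<le> 2 * t"
    if "0 \<le> s" "s \<le> t" "0 \<le> r" "r \<le> t" for s r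
  proof -
    have "norm (s *\<^sub>R ei + r *\<^sub>R ej) \<le> norm (s *\<^sub>R ei) + norm (r *\<^sub>R ej)"
      by (rule norm_triangle_ineq)
    then show ?thesis using that by (simp add: dist_norm ei_def ej_def add.assoc)
  qed
  have inU: "p + s *\<^sub>R ei + r *\<^sub>R ej \<in> U" if "0 \<le> s" "s \<le> t" "0 \<le> r" "r \<le> t" for s r
    using near[OF that] ball by (auto simp: dist_commute)
  define \<phi> where "\<phi> s = u (p + t *\<^sub>R ej + s *\<^sub>R ei) - u (p + s *\<^sub>R ei)" for s
  have "DERIV \<phi> s :> pd i u (p + t *\<^sub>R ej + s *\<^sub>R ei) - pd i u (p + s *\<^sub>R ei)"
    if "0 \<le> s" "s \<le> t" for s
  proof -
    have "u differentiable at (p + t *\<^sub>R ej + s *\<^sub>R ei)" "u differentiable at (p + s *\<^sub>R ei)"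
      using Ck_on_2_D(1)[OF C2 inU[of s t]] Ck_on_2_D(1)[OF C2 inU[of s 0]] that t
      by (simp_all add: algebra_simps)
    then show ?thesis
      unfolding \<phi>_def pd_def ei_def by (intro DERIV_diff has_real_derivative_along_line)
  qed
  from MVT2[OF t this] obtain \<xi> where \<xi>: "0 < \<xi>" "\<xi> < t"
    "\<phi> t - \<phi> 0 = t * (pd i u (p + t *\<^sub>R ej + \<xi> *\<^sub>R ei) - pd i u (p + \<xi> *\<^sub>R ei))"
    by auto
  have "DERIV (\<lambda>r. pd i u (p + \<xi> *\<^sub>R ei + r *\<^sub>R ej)) r :> pd j (pd i u) (p + \<xi> *\<^sub>R ei + r *\<^sub>R ej)"
    if "0 \<le> r" "r \<le> t" for r
    using Ck_on_2_D(2)[OF C2 inU] that \<xi> unfolding pd_def[of j] ej_def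
    by (intro has_real_derivative_along_line) auto
  from MVT2[OF t this] obtain \<eta> where \<eta>: "0 < \<eta>" "\<eta> < t"
    "pd i u (p + \<xi> *\<^sub>R ei + t *\<^sub>R ej) - pd i u (p + \<xi> *\<^sub>R ei + 0 *\<^sub>R ej)
       = t * pd j (pd i u) (p + \<xi> *\<^sub>R ei + \<eta> *\<^sub>R ej)"
    by auto
  have "u (p + t *\<^sub>R ei + t *\<^sub>R ej) - u (p + t *\<^sub>R ei) - u (p + t *\<^sub>R ej) + u p = \<phi> t - \<phi> 0"
    by (simp add: \<phi>_def algebra_simps)
  also have "\<dots> = t\<^sup>2 * pd j (pd i u) (p + \<xi> *\<^sub>R ei + \<eta> *\<^sub>R ej)"
    using \<xi>(3) \<eta>(3) by (simp add: power2_eq_square algebra_simps)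
  finally show ?thesis
    using near[of \<xi> \<eta>] \<xi> \<eta> by (intro exI[of _ "p + \<xi> *\<^sub>R ei + \<eta> *\<^sub>R ej"]) auto
qed

text \<open>Schwarz's theorem: both mixed partials are limits of the same second difference quotient.\<close>
lemma pd_commute:
  fixes u :: "pt \<Rightarrow> real"
  assumes "open U" "p \<in> U" and C2: "Ck_on 2 U u"
  shows "pd j (pd i u) p = pd i (pd j u) p"
proof -
  let ?Hij = "pd j (pd i u)" and ?Hji = "pd i (pd j u)"
  have close: "\<bar>?Hij p - ?Hji p\<bar> < 2 * e" if "e > 0" for e
  proof -
    obtain d1 where d1: "d1 > 0" "\<And>y. dist y p < d1 \<Longrightarrow> dist (?Hij y) (?Hij p) < e"
      using Ck_on_2_isCont_pd_pd[OF C2 assms(1,2)] \<open>e > 0\<close> unfolding continuous_at_eps_delta by blast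
    obtain d2 where d2: "d2 > 0" "\<And>y. dist y p < d2 \<Longrightarrow> dist (?Hji y) (?Hji p) < e"
      using Ck_on_2_isCont_pd_pd[OF C2 assms(1,2)] \<open>e > 0\<close> unfolding continuous_at_eps_delta by blast
    obtain d0 where d0: "d0 > 0" "cball p d0 \<subseteq> U"
      using assms(1,2) open_contains_cball by blast
    define t where "t = min d0 (min d1 d2) / 4"
    have t: "t > 0" "2 * t < d1" "2 * t < d2" using d0 d1 d2 by (auto simp: t_def)
    have ball: "cball p (2 * t) \<subseteq> U" using d0 by (auto simp: t_def)
    obtain q1 where q1: "dist q1 p \<le> 2 * t" "u (p + t *\<^sub>R axis i 1 + t *\<^sub>R axis j 1)
        - u (p + t *\<^sub>R axis i 1) - u (p + t *\<^sub>R axis j 1) + u p = t\<^sup>2 * ?Hij q1"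
      using second_difference_mean_value[OF C2 t(1) ball, of i j] by blast
    obtain q2 where q2: "dist q2 p \<le> 2 * t" "u (p + t *\<^sub>R axis j 1 + t *\<^sub>R axis i 1)
        - u (p + t *\<^sub>R axis j 1) - u (p + t *\<^sub>R axis i 1) + u p = t\<^sup>2 * ?Hji q2"
      using second_difference_mean_value[OF C2 t(1) ball, of j i] by blast
    have "?Hij q1 = ?Hji q2"
      using q1(2) q2(2) t(1) by (simp add: algebra_simps)
    moreover have "dist (?Hij q1) (?Hij p) < e" "dist (?Hji q2) (?Hji p) < e"
      using d1(2) d2(2) q1(1) q2(1) t by auto
    ultimately show ?thesis by (simp add: dist_real_def)
  qed
  show ?thesis
  proof (rule ccontr)
    assume "?Hij p \<noteq> ?Hji p"
    then show False using close[of "\<bar>?Hij p - ?Hji p\<bar> / 4"] by simp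
  qed
qed

lemma frechet_derivative_eq_sum_pd:
  fixes f :: "pt \<Rightarrow> real"
  assumes "f differentiable at x"
  shows "frechet_derivative f (at x) v = (\<Sum>i\<in>UNIV. v $ i * pd i f x)"
proof -
  have "frechet_derivative f (at x) v = frechet_derivative f (at x) (\<Sum>i\<in>UNIV. v $ i *\<^sub>R axis i 1)"
    using basis_expansion[of v] by (simp add: scalar_mult_eq_scaleR)
  also have "\<dots> = (\<Sum>i\<in>UNIV. v $ i * frechet_derivative f (at x) (axis i 1))"
    using linear_frechet_derivative[OF assms] by (simp add: linear_sum linear_scale)
  finally show ?thesis by (simp add: pd_def)
qed

lemma dder_has_derivative:
  fixes Y :: "pt \<Rightarrow> pt" and u :: "pt \<Rightarrow> real"
  assumes U: "open U" "p \<in> U" and C2: "Ck_on 2 U u" and Y: "Y differentiable at p"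
  shows "(dder Y u has_derivative (\<lambda>v. \<Sum>i\<in>UNIV. Y p $ i * (\<Sum>j\<in>UNIV. v $ j * pd j (pd i u) p)
      + frechet_derivative Y (at p) v $ i * pd i u p)) (at p)"
proof -
  have "((\<lambda>y. \<Sum>i\<in>UNIV. Y y $ i * pd i u y) has_derivative (\<lambda>v. \<Sum>i\<in>UNIV.
      Y p $ i * (\<Sum>j\<in>UNIV. v $ j * pd j (pd i u) p) + frechet_derivative Y (at p) v $ i * pd i u p)) (at p)"
  proof (rule has_derivative_sum)
    fix i :: 3
    have "((\<lambda>y. Y y $ i) has_derivative (\<lambda>v. frechet_derivative Y (at p) v $ i)) (at p)"
      using bounded_linear.has_derivative[OF bounded_linear_vec_nth Y[unfolded frechet_derivative_works]] .
    moreover have "(pd i u has_derivative (\<lambda>v. \<Sum>j\<in>UNIV. v $ j * pd j (pd i u) p)) (at p)"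
    proof -
      have "(pd i u has_derivative frechet_derivative (pd i u) (at p)) (at p)"
        using Ck_on_2_D(2)[OF C2 U(2)] frechet_derivative_works by blast
      moreover have "frechet_derivative (pd i u) (at p) = (\<lambda>v. \<Sum>j\<in>UNIV. v $ j * pd j (pd i u) p)"
        using frechet_derivative_eq_sum_pd[OF Ck_on_2_D(2)[OF C2 U(2)]] by (rule ext)
      ultimately show ?thesis by simp
    qed
    ultimately show "((\<lambda>y. Y y $ i * pd i u y) has_derivative (\<lambda>v. Y p $ i * (\<Sum>j\<in>UNIV. v $ j * pd j (pd i u) p)
        + frechet_derivative Y (at p) v $ i * pd i u p)) (at p)"
      by (rule has_derivative_mult)
  qed
  then show ?thesis
    by (rule has_derivative_transform_within_open[OF _ U])
      (simp add: dder_def frechet_derivative_eq_sum_pd Ck_on_2_D(1)[OF C2] mult.commute)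
qed

lemma dder_differentiable:
  assumes "open U" "p \<in> U" "Ck_on 2 U u" "Y differentiable at p"
  shows "dder Y u differentiable at p"
  using dder_has_derivative[OF assms] by (auto simp: differentiable_def)

text \<open>The second-order terms of \<open>X(Yu) - Y(Xu)\<close> cancel by symmetry of the Hessian.\<close>
lemma dder_lie:
  assumes U: "open U" "p \<in> U" and C2: "Ck_on 2 U u"
    and X: "X differentiable at p" and Y: "Y differentiable at p"
  shows "dder X (dder Y u) p - dder Y (dder X u) p = dder (lie X Y) u p"
proof -
  let ?H = "\<lambda>i j. pd j (pd i u) p"
  have expand: "dder Z (dder W u) p = (\<Sum>i\<in>UNIV. W p $ i * (\<Sum>j\<in>UNIV. Z p $ j * ?H i j))
      + (\<Sum>i\<in>UNIV. frechet_derivative W (at p) (Z p) $ i * pd i u p)"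
    if "W differentiable at p" for Z W :: "pt \<Rightarrow> pt"
    using frechet_derivative_at[OF dder_has_derivative[OF U C2 that], symmetric]
    by (simp add: dder_def sum.distrib)
  have "(\<Sum>i\<in>UNIV. Y p $ i * (\<Sum>j\<in>UNIV. X p $ j * ?H i j))
      = (\<Sum>i\<in>UNIV. \<Sum>j\<in>UNIV. Y p $ i * X p $ j * ?H i j)"
    by (simp add: sum_distrib_left mult.assoc)
  also have "\<dots> = (\<Sum>j\<in>UNIV. \<Sum>i\<in>UNIV. Y p $ i * X p $ j * ?H i j)"
    by (rule sum.swap)
  also have "\<dots> = (\<Sum>j\<in>UNIV. X p $ j * (\<Sum>i\<in>UNIV. Y p $ i * ?H j i))"
    by (simp add: sum_distrib_left pd_commute[OF U C2, of i j for i j] mult.assoc mult.left_commute)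
  finally have hessian_sym: "(\<Sum>i\<in>UNIV. Y p $ i * (\<Sum>j\<in>UNIV. X p $ j * ?H i j))
      = (\<Sum>i\<in>UNIV. X p $ i * (\<Sum>j\<in>UNIV. Y p $ j * ?H i j))" .
  have "dder X (dder Y u) p - dder Y (dder X u) p
      = (\<Sum>i\<in>UNIV. (frechet_derivative Y (at p) (X p) - frechet_derivative X (at p) (Y p)) $ i * pd i u p)"
    unfolding expand[OF Y] expand[OF X] hessian_sym add_diff_cancel_left sum_subtractf[symmetric]
    by (simp only: vector_minus_component left_diff_distrib)
  also have "\<dots> = dder (lie X Y) u p"
    by (simp add: dder_def lie_def frechet_derivative_eq_sum_pd Ck_on_2_D(1)[OF C2 U(2)])
  finally show ?thesis .
qed

section \<open>The orthonormal frame of the contact distribution\<close>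

lemma subspace_Dfib: "subspace (Dfib w x)"
  unfolding Dfib_def by (rule subspace_hyperplane)

lemmas Dfib_add = subspace_add[OF subspace_Dfib]
   and Dfib_scaleR = subspace_scale[OF subspace_Dfib]

locale contact_frame =
  fixes U :: "pt set" and w X0 X1 X2 :: "pt \<Rightarrow> pt" and g :: "pt \<Rightarrow> pt \<Rightarrow> pt \<Rightarrow> real"
  assumes open_U: "open U"
    and differentiable_w: "\<And>x. x \<in> U \<Longrightarrow> w differentiable at x"
    and differentiable_X0: "\<And>x. x \<in> U \<Longrightarrow> X0 differentiable at x"
    and differentiable_X1: "\<And>x. x \<in> U \<Longrightarrow> X1 differentiable at x"
    and differentiable_X2: "\<And>x. x \<in> U \<Longrightarrow> X2 differentiable at x"
    and g_symm: "\<And>x a b. \<lbrakk>x \<in> U; a \<in> Dfib w x; b \<in> Dfib w x\<rbrakk> \<Longrightarrow> g x a b = g x b a"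
    and g_add: "\<And>x a b c. \<lbrakk>x \<in> U; a \<in> Dfib w x; b \<in> Dfib w x; c \<in> Dfib w x\<rbrakk>
      \<Longrightarrow> g x (a + b) c = g x a c + g x b c"
    and g_scaleR: "\<And>x a b r. \<lbrakk>x \<in> U; a \<in> Dfib w x; b \<in> Dfib w x\<rbrakk> \<Longrightarrow> g x (r *\<^sub>R a) b = r * g x a b"
    and reeb_dform: "\<And>x v. x \<in> U \<Longrightarrow> dform w x (X0 x) v = 0"
    and reeb_w: "\<And>x. x \<in> U \<Longrightarrow> w x \<bullet> X0 x = 1"
    and X1_horizontal: "\<And>x. x \<in> U \<Longrightarrow> X1 x \<in> Dfib w x"
    and X2_horizontal: "\<And>x. x \<in> U \<Longrightarrow> X2 x \<in> Dfib w x"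
    and frame_orthonormal: "\<And>x. x \<in> U \<Longrightarrow>
      g x (X1 x) (X1 x) = 1 \<and> g x (X2 x) (X2 x) = 1 \<and> g x (X1 x) (X2 x) = 0"
    and dform_eq_neg_volg: "\<And>x a b. \<lbrakk>x \<in> U; a \<in> Dfib w x; b \<in> Dfib w x\<rbrakk>
      \<Longrightarrow> dform w x a b = - volg g X1 X2 x a b"
begin

lemma frame_combination_horizontal: "x \<in> U \<Longrightarrow> s *\<^sub>R X1 x + t *\<^sub>R X2 x \<in> Dfib w x"
  by (simp add: Dfib_add Dfib_scaleR X1_horizontal X2_horizontal)

lemma g_frame_coords:
  assumes x: "x \<in> U"
  shows "g x (s1 *\<^sub>R X1 x + t1 *\<^sub>R X2 x) (s2 *\<^sub>R X1 x + t2 *\<^sub>R X2 x) = s1 * s2 + t1 * t2"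
proof -
  have lin: "g x (s *\<^sub>R X1 x + t *\<^sub>R X2 x) c = s * g x (X1 x) c + t * g x (X2 x) c"
    if "c \<in> Dfib w x" for s t c
    using that x by (simp add: g_add g_scaleR Dfib_scaleR X1_horizontal X2_horizontal)
  have "g x (X1 x) (s2 *\<^sub>R X1 x + t2 *\<^sub>R X2 x) = s2" "g x (X2 x) (s2 *\<^sub>R X1 x + t2 *\<^sub>R X2 x) = t2"
    using lin[OF X1_horizontal[OF x]] lin[OF X2_horizontal[OF x]] frame_orthonormal[OF x]
      g_symm[OF x X1_horizontal[OF x] X2_horizontal[OF x]]
      g_symm[OF x _ frame_combination_horizontal[OF x], of "X1 x" s2 t2]
      g_symm[OF x _ frame_combination_horizontal[OF x], of "X2 x" s2 t2]
    by (simp_all add: X1_horizontal X2_horizontal x)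
  then show ?thesis
    using lin[OF frame_combination_horizontal[OF x]] by simp
qed

lemma Dfib_frame_expansion:
  assumes x: "x \<in> U" and v: "v \<in> Dfib w x"
  shows "v = g x v (X1 x) *\<^sub>R X1 x + g x v (X2 x) *\<^sub>R X2 x"
proof -
  note on = frame_orthonormal[OF x]
  have "X1 x \<noteq> X2 x" using on by auto
  moreover have "X1 x \<notin> span {X2 x}"
  proof
    assume "X1 x \<in> span {X2 x}"
    then obtain k where "X1 x = k *\<^sub>R X2 x" by (auto simp: span_singleton)
    then show False using on g_frame_coords[OF x, of 0 k 1 0] by simp
  qed
  moreover have "X2 x \<noteq> 0"
    using on g_frame_coords[OF x, of 0 0 0 0] by auto
  ultimately have indep: "independent {X1 x, X2 x}"
    by (simp add: independent_insert)
  have "dim (Dfib w x) = 2"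
    using dim_hyperplane[of "w x"] reeb_w[OF x] unfolding Dfib_def by force
  then have "Dfib w x \<subseteq> span {X1 x, X2 x}"
    using indep \<open>X1 x \<noteq> X2 x\<close> X1_horizontal[OF x] X2_horizontal[OF x]
    by (intro card_ge_dim_independent) auto
  with v obtain s t where st: "v = s *\<^sub>R X1 x + t *\<^sub>R X2 x"
    unfolding span_insert[of "X1 x"] span_singleton by (auto simp: algebra_simps)
  show ?thesis
    using st g_frame_coords[OF x, of s t 1 0] g_frame_coords[OF x, of s t 0 1] by simp
qed

lemma g_frame_X1: "x \<in> U \<Longrightarrow> g x (s *\<^sub>R X1 x + t *\<^sub>R X2 x) (X1 x) = s"
  using g_frame_coords[of x s t 1 0] by simp

lemma g_frame_X2: "x \<in> U \<Longrightarrow> g x (s *\<^sub>R X1 x + t *\<^sub>R X2 x) (X2 x) = t"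
  using g_frame_coords[of x s t 0 1] by simp

lemma Jmap_frame:
  assumes x: "x \<in> U" and v: "v \<in> Dfib w x"
  shows "Jmap w g x v = g x v (X1 x) *\<^sub>R X2 x - g x v (X2 x) *\<^sub>R X1 x"
proof -
  let ?c = "(- g x v (X2 x)) *\<^sub>R X1 x + g x v (X1 x) *\<^sub>R X2 x"
  have c_horizontal: "?c \<in> Dfib w x"
    by (rule frame_combination_horizontal[OF x])
  have c_dual: "g x v' ?c = dform w x v' v" if v': "v' \<in> Dfib w x" for v'
  proof -
    have "g x v' ?c = g x (g x v' (X1 x) *\<^sub>R X1 x + g x v' (X2 x) *\<^sub>R X2 x) ?c"
      by (rule arg_cong[where f="\<lambda>t. g x t ?c", OF Dfib_frame_expansion[OF x v']])
    also have "\<dots> = g x v' (X1 x) * (- g x v (X2 x)) + g x v' (X2 x) * g x v (X1 x)"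
      by (rule g_frame_coords[OF x])
    also have "\<dots> = dform w x v' v"
      using dform_eq_neg_volg[OF x v' v] by (simp add: volg_def)
    finally show ?thesis .
  qed
  have "Jmap w g x v = ?c"
    unfolding Jmap_def
  proof (rule the_equality)
    show "?c \<in> Dfib w x \<and> (\<forall>v'\<in>Dfib w x. g x v' ?c = dform w x v' v)"
      using c_horizontal c_dual by blast
  next
    fix c assume c: "c \<in> Dfib w x \<and> (\<forall>v'\<in>Dfib w x. g x v' c = dform w x v' v)"
    have "g x c (X1 x) = g x ?c (X1 x)" "g x c (X2 x) = g x ?c (X2 x)"
      using c c_dual X1_horizontal[OF x] X2_horizontal[OF x] c_horizontal g_symm[OF x] by metis+
    then show "c = ?c"
      using Dfib_frame_expansion[OF x] c c_horizontal by metis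
  qed
  then show ?thesis by (simp add: algebra_simps)
qed

end

section \<open>The fields \<open>F\<^sub>1\<close> and \<open>F\<^sub>2\<close>\<close>

definition horizontal_normal :: "(pt \<Rightarrow> pt) \<Rightarrow> (pt \<Rightarrow> pt) \<Rightarrow> (pt \<Rightarrow> real) \<Rightarrow> pt \<Rightarrow> pt" where
  "horizontal_normal X1 X2 u x = (1 / sqrt ((dder X1 u x)\<^sup>2 + (dder X2 u x)\<^sup>2)) *\<^sub>R
      (dder X1 u x *\<^sub>R X1 x + dder X2 u x *\<^sub>R X2 x)"

lemma F1fld_frame_coords:
  fixes X1 X2 :: "pt \<Rightarrow> pt" and u :: "pt \<Rightarrow> real" and x :: pt
  defines "R \<equiv> sqrt ((dder X1 u x)\<^sup>2 + (dder X2 u x)\<^sup>2)"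
  shows "F1fld X1 X2 u x = (dder X2 u x / R) *\<^sub>R X1 x + (- dder X1 u x / R) *\<^sub>R X2 x"
  by (simp add: F1fld_def R_def divide_inverse scaleR_diff_right mult.commute)

lemma horizontal_normal_frame_coords:
  fixes X1 X2 :: "pt \<Rightarrow> pt" and u :: "pt \<Rightarrow> real" and x :: pt
  defines "R \<equiv> sqrt ((dder X1 u x)\<^sup>2 + (dder X2 u x)\<^sup>2)"
  shows "horizontal_normal X1 X2 u x = (dder X1 u x / R) *\<^sub>R X1 x + (dder X2 u x / R) *\<^sub>R X2 x"
  by (simp add: horizontal_normal_def R_def divide_inverse scaleR_add_right mult.commute)

lemma F2fld_eq_bfun_horizontal_normal:
  "F2fld X0 X1 X2 u x = bfun X0 X1 X2 u x *\<^sub>R horizontal_normal X1 X2 u x - X0 x"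
proof -
  let ?s = "(dder X1 u x)\<^sup>2 + (dder X2 u x)\<^sup>2"
  have "1 / ?s = (1 / sqrt ?s) * (1 / sqrt ?s)"
    by (simp flip: real_sqrt_mult)
  then show ?thesis
    by (simp add: F2fld_def bfun_def horizontal_normal_def scaleR_add_right)
qed

lemma frechet_derivative_frame_combination:
  assumes "u differentiable at x"
  shows "frechet_derivative u (at x) (s *\<^sub>R X1 x + t *\<^sub>R X2 x) = s * dder X1 u x + t * dder X2 u x"
  using linear_frechet_derivative[OF assms] by (simp add: dder_def linear_add linear_scale)

lemma dder_F1fld_self:
  assumes "u differentiable at x"
  shows "dder (F1fld X1 X2 u) u x = 0"
  unfolding dder_def F1fld_frame_coords frechet_derivative_frame_combination[OF assms]
  by (simp add: algebra_simps)

lemma dder_F2fld_self: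
  assumes "u differentiable at x" and "\<not> (dder X1 u x = 0 \<and> dder X2 u x = 0)"
  shows "dder (F2fld X0 X1 X2 u) u x = 0"
proof -
  let ?R = "sqrt ((dder X1 u x)\<^sup>2 + (dder X2 u x)\<^sup>2)"
  have R: "?R > 0" "?R * ?R = (dder X1 u x)\<^sup>2 + (dder X2 u x)\<^sup>2"
    using assms(2) by (auto simp: sum_power2_gt_zero_iff)
  have "dder (horizontal_normal X1 X2 u) u x
      = (dder X1 u x / ?R) * dder X1 u x + (dder X2 u x / ?R) * dder X2 u x"
    by (simp only: dder_def[of "horizontal_normal X1 X2 u"] horizontal_normal_frame_coords
        frechet_derivative_frame_combination[OF assms(1)])
  also have "\<dots> = (?R * ?R) / ?R"
    using R(2) by (simp add: power2_eq_square add_divide_distrib)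
  also have "\<dots> = ?R"
    using R(1) by (intro nonzero_mult_div_cancel_right) linarith
  finally have "dder (horizontal_normal X1 X2 u) u x = ?R" .
  then show ?thesis
    using linear_frechet_derivative[OF assms(1)] assms(2)
    by (simp add: dder_def F2fld_eq_bfun_horizontal_normal bfun_def linear_diff linear_scale)
qed

context contact_frame
begin

lemma F1fld_horizontal: "x \<in> U \<Longrightarrow> F1fld X1 X2 u x \<in> Dfib w x"
  unfolding F1fld_frame_coords by (rule frame_combination_horizontal)

lemma horizontal_normal_horizontal: "x \<in> U \<Longrightarrow> horizontal_normal X1 X2 u x \<in> Dfib w x"
  unfolding horizontal_normal_frame_coords by (rule frame_combination_horizontal)

lemma Jmap_F1fld:
  assumes x: "x \<in> U"
  shows "Jmap w g x (F1fld X1 X2 u x) = horizontal_normal X1 X2 u x"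
  unfolding Jmap_frame[OF x F1fld_horizontal[OF x]]
  unfolding F1fld_frame_coords g_frame_X1[OF x] g_frame_X2[OF x] horizontal_normal_frame_coords
  by (simp add: algebra_simps)

lemma F1fld_horizontal_normal_orthonormal:
  assumes x: "x \<in> U" and nc: "\<not> (dder X1 u x = 0 \<and> dder X2 u x = 0)"
  shows "g x (F1fld X1 X2 u x) (F1fld X1 X2 u x) = 1"
    and "g x (horizontal_normal X1 X2 u x) (F1fld X1 X2 u x) = 0"
    and "volg g X1 X2 x (F1fld X1 X2 u x) (horizontal_normal X1 X2 u x) = 1"
proof -
  define R where "R = sqrt ((dder X1 u x)\<^sup>2 + (dder X2 u x)\<^sup>2)"
  have R: "R \<noteq> 0" "R * R = dder X1 u x * dder X1 u x + dder X2 u x * dder X2 u x"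
    using nc by (auto simp: R_def power2_eq_square)
  note coords = F1fld_frame_coords horizontal_normal_frame_coords R_def[symmetric]
  have "g x (F1fld X1 X2 u x) (F1fld X1 X2 u x)
      = (dder X1 u x * dder X1 u x + dder X2 u x * dder X2 u x) / (R * R)"
    using R(1) unfolding coords g_frame_coords[OF x] by (simp add: field_simps)
  also have "\<dots> = 1"
    unfolding R(2)[symmetric] using R(1) by simp
  finally show "g x (F1fld X1 X2 u x) (F1fld X1 X2 u x) = 1" .
  show "g x (horizontal_normal X1 X2 u x) (F1fld X1 X2 u x) = 0"
    unfolding coords g_frame_coords[OF x] by simp
  have "volg g X1 X2 x (F1fld X1 X2 u x) (horizontal_normal X1 X2 u x)
      = (dder X1 u x * dder X1 u x + dder X2 u x * dder X2 u x) / (R * R)"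
    using R(1) unfolding volg_def coords g_frame_X1[OF x] g_frame_X2[OF x] by (simp add: field_simps)
  also have "\<dots> = 1"
    unfolding R(2)[symmetric] using R(1) by simp
  finally show "volg g X1 X2 x (F1fld X1 X2 u x) (horizontal_normal X1 X2 u x) = 1" .
qed

lemma horizontal_tangent_orthogonal_F1fld_eq_0:
  assumes x: "x \<in> U" and nc: "\<not> (dder X1 u x = 0 \<and> dder X2 u x = 0)" and u: "u differentiable at x"
    and V: "V \<in> Dfib w x" and orth: "g x V (F1fld X1 X2 u x) = 0" and tangent: "frechet_derivative u (at x) V = 0"
  shows "V = 0"
proof -
  let ?a = "dder X1 u x" and ?c = "dder X2 u x"
  let ?R = "sqrt (?a\<^sup>2 + ?c\<^sup>2)"
  obtain v1 v2 where V_eq: "V = v1 *\<^sub>R X1 x + v2 *\<^sub>R X2 x"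
    using Dfib_frame_expansion[OF x V] by blast
  have "v1 * (?c / ?R) + v2 * (- ?a / ?R) = 0"
    using orth unfolding V_eq F1fld_frame_coords g_frame_coords[OF x] .
  then have e1: "v1 * ?c - v2 * ?a = 0"
    using nc by (simp add: field_simps)
  have e2: "v1 * ?a + v2 * ?c = 0"
    using tangent unfolding V_eq frechet_derivative_frame_combination[OF u] .
  have "v1 * (?a\<^sup>2 + ?c\<^sup>2) = ?a * (v1 * ?a + v2 * ?c) + ?c * (v1 * ?c - v2 * ?a)"
    and "v2 * (?a\<^sup>2 + ?c\<^sup>2) = ?c * (v1 * ?a + v2 * ?c) - ?a * (v1 * ?c - v2 * ?a)"
    by (simp_all add: algebra_simps power2_eq_square)
  moreover have "?a\<^sup>2 + ?c\<^sup>2 \<noteq> 0"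
    using nc by simp
  ultimately have "v1 = 0" "v2 = 0"
    using e1 e2 by auto
  then show ?thesis
    using V_eq by simp
qed

end

locale noncharacteristic_point = contact_frame +
  fixes u :: "pt \<Rightarrow> real" and p :: pt
  assumes u_C2: "Ck_on 2 U u" and p_in_U: "p \<in> U"
    and noncharacteristic: "\<not> (dder X1 u p = 0 \<and> dder X2 u p = 0)"
begin

abbreviation "F1 \<equiv> F1fld X1 X2 u"
abbreviation "F2 \<equiv> F2fld X0 X1 X2 u"
abbreviation "\<nu> \<equiv> horizontal_normal X1 X2 u"
abbreviation "b \<equiv> bfun X0 X1 X2 u"

lemma u_differentiable: "u differentiable at p"
  by (rule Ck_on_2_D(1)[OF u_C2 p_in_U])

lemma fields_differentiable:
  shows "F1 differentiable at p" and "\<nu> differentiable at p"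
    and "b differentiable at p" and "F2 differentiable at p"
proof -
  let ?s = "\<lambda>y. (dder X1 u y)\<^sup>2 + (dder X2 u y)\<^sup>2"
  have d: "dder X0 u differentiable at p" "dder X1 u differentiable at p" "dder X2 u differentiable at p"
    using dder_differentiable[OF open_U p_in_U u_C2] differentiable_X0 differentiable_X1
      differentiable_X2 p_in_U
    by auto
  have s_pos: "?s p > 0"
    using noncharacteristic by (simp add: sum_power2_gt_zero_iff)
  have "sqrt differentiable at (?s p)"
    using DERIV_real_sqrt[OF s_pos] by (auto simp: differentiable_def has_field_derivative_def)
  then have R: "(\<lambda>y. sqrt (?s y)) differentiable at p"
    by (rule differentiable_compose[where g = ?s, unfolded o_def]) (use d in auto)
  have R_nz: "sqrt (?s p) \<noteq> 0"
    using real_sqrt_gt_zero[OF s_pos] by linarith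
  note X12 = differentiable_X1[OF p_in_U] differentiable_X2[OF p_in_U]
  show "F1 differentiable at p"
    unfolding F1fld_def[abs_def] using R R_nz d X12 by (intro derivative_intros) auto
  show \<nu>: "\<nu> differentiable at p"
    unfolding horizontal_normal_def[abs_def] using R R_nz d X12 by (intro derivative_intros) auto
  show b: "b differentiable at p"
    unfolding bfun_def[abs_def] using R R_nz d by (intro derivative_intros) auto
  show "F2 differentiable at p"
    unfolding F2fld_eq_bfun_horizontal_normal[abs_def] using \<nu> b differentiable_X0[OF p_in_U]
    by (intro derivative_intros) auto
qed

lemma dder_lie_F1_F2: "dder (lie F1 F2) u p = 0"
proof -
  have "continuous (at p) (dder X1 u)" "continuous (at p) (dder X2 u)"
    using dder_differentiable[OF open_U p_in_U u_C2] differentiable_X1[OF p_in_U]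
      differentiable_X2[OF p_in_U]
    by (auto intro: differentiable_imp_continuous_within)
  then have "continuous (at p) (\<lambda>y. (dder X1 u y)\<^sup>2 + (dder X2 u y)\<^sup>2)"
    by (intro continuous_intros)
  moreover have "(dder X1 u p)\<^sup>2 + (dder X2 u p)\<^sup>2 \<noteq> 0"
    using noncharacteristic by simp
  ultimately obtain e where e: "e > 0" "\<And>y. dist p y < e \<Longrightarrow> (dder X1 u y)\<^sup>2 + (dder X2 u y)\<^sup>2 \<noteq> 0"
    by (blast dest: continuous_at_avoid)
  have "frechet_derivative (dder F2 u) (at p) = (\<lambda>v. 0)"
  proof (rule frechet_derivative_locally_const[where S = "U \<inter> ball p e" and k = 0])
    fix y assume "y \<in> U \<inter> ball p e"
    then show "dder F2 u y = 0"
      using e(2) Ck_on_2_D(1)[OF u_C2] by (intro dder_F2fld_self) auto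
  qed (use open_U p_in_U e(1) in auto)
  moreover have "frechet_derivative (dder F1 u) (at p) = (\<lambda>v. 0)"
    using Ck_on_2_D(1)[OF u_C2]
    by (intro frechet_derivative_locally_const[OF open_U p_in_U, where k = 0] dder_F1fld_self)
  ultimately show ?thesis
    using dder_lie[OF open_U p_in_U u_C2 fields_differentiable(1,4)] by (simp add: dder_def)
qed

lemma inner_w_lie_F1_nu: "w p \<bullet> lie F1 \<nu> p = 1"
proof -
  have "w p \<bullet> lie F1 \<nu> p = - dform w p (F1 p) (\<nu> p)"
    using F1fld_horizontal horizontal_normal_horizontal
    by (intro inner_lie_eq_neg_dform[OF open_U p_in_U differentiable_w[OF p_in_U]
          fields_differentiable(1,2), where k = 0 and l = 0])
      (auto simp: Dfib_def)
  also have "\<dots> = 1"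
    using dform_eq_neg_volg[OF p_in_U F1fld_horizontal[OF p_in_U] horizontal_normal_horizontal[OF p_in_U]]
      F1fld_horizontal_normal_orthonormal(3)[OF p_in_U noncharacteristic] by simp
  finally show ?thesis .
qed

lemma inner_w_lie_X0_F1: "w p \<bullet> lie X0 F1 p = 0"
proof -
  have "w p \<bullet> lie X0 F1 p = - dform w p (X0 p) (F1 p)"
    using reeb_w F1fld_horizontal
    by (intro inner_lie_eq_neg_dform[OF open_U p_in_U differentiable_w[OF p_in_U]
          differentiable_X0[OF p_in_U] fields_differentiable(1), where k = 1 and l = 0])
      (auto simp: Dfib_def)
  then show ?thesis
    using reeb_dform[OF p_in_U] by simp
qed

lemma lie_F1_F2_expansion:
  "lie F1 F2 p = b p *\<^sub>R (lie F1 \<nu> p - X0 p) + (dder F1 b p + (b p)\<^sup>2) *\<^sub>R \<nu> p + lie X0 F1 p - b p *\<^sub>R F2 p"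
proof -
  note d = fields_differentiable
  have F2: "F2 = (\<lambda>y. b y *\<^sub>R \<nu> y - X0 y)"
    by (rule ext) (rule F2fld_eq_bfun_horizontal_normal)
  have "lie F1 F2 p = lie F1 (\<lambda>y. b y *\<^sub>R \<nu> y) p - lie F1 X0 p"
    unfolding F2 using d(2,3) by (intro lie_diff_right d(1) differentiable_X0[OF p_in_U]) auto
  also have "\<dots> = b p *\<^sub>R lie F1 \<nu> p + dder F1 b p *\<^sub>R \<nu> p + lie X0 F1 p"
    using lie_scaleR_right[OF d(1,3,2)] lie_skew[of F1 X0 p] by simp
  finally show ?thesis
    using F2 by (simp add: algebra_simps power2_eq_square)
qed

lemma hfun_F1: "hfun w g X0 F1 p = - g p (lie F1 \<nu> p - X0 p) (F1 p)"
proof -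
  have "lie F1 (\<lambda>y. Jmap w g y (F1 y)) p = lie F1 \<nu> p"
    using frechet_derivative_cong_open[OF open_U p_in_U, of "\<lambda>y. Jmap w g y (F1 y)"] Jmap_F1fld p_in_U
    by (simp add: lie_def)
  then show ?thesis
    using inner_w_lie_F1_nu by (simp add: hfun_def projD_def)
qed

lemma lie_F1_F2:
  "lie F1 F2 p = - (b p * hfun w g X0 F1 p + etafun g X0 F1 p) *\<^sub>R F1 p - b p *\<^sub>R F2 p"
proof -
  let ?k = "b p * hfun w g X0 F1 p + etafun g X0 F1 p"
  define P where "P = lie F1 \<nu> p - X0 p"
  define Q where "Q = lie X0 F1 p"
  define V where "V = lie F1 F2 p + ?k *\<^sub>R F1 p + b p *\<^sub>R F2 p"
  have V_eq: "V = b p *\<^sub>R P + (dder F1 b p + (b p)\<^sup>2) *\<^sub>R \<nu> p + Q + ?k *\<^sub>R F1 p"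
    unfolding V_def P_def Q_def lie_F1_F2_expansion by (simp add: algebra_simps)
  have horizontal: "P \<in> Dfib w p" "Q \<in> Dfib w p" "\<nu> p \<in> Dfib w p" "F1 p \<in> Dfib w p"
    using inner_w_lie_F1_nu inner_w_lie_X0_F1 reeb_w[OF p_in_U]
      horizontal_normal_horizontal[OF p_in_U] F1fld_horizontal[OF p_in_U]
    by (simp_all add: P_def Q_def Dfib_def inner_diff_right)
  have "V = 0"
  proof (rule horizontal_tangent_orthogonal_F1fld_eq_0[OF p_in_U noncharacteristic u_differentiable])
    show "V \<in> Dfib w p"
      unfolding V_eq using horizontal by (simp add: Dfib_add Dfib_scaleR)
    show "g p V (F1 p) = 0"
      unfolding V_eq using horizontal p_in_U hfun_F1
        F1fld_horizontal_normal_orthonormal[OF p_in_U noncharacteristic]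
      by (simp add: g_add g_scaleR Dfib_add Dfib_scaleR etafun_def P_def[symmetric] Q_def[symmetric])
    show "frechet_derivative u (at p) V = 0"
      unfolding V_def using linear_frechet_derivative[OF u_differentiable] dder_lie_F1_F2
        dder_F1fld_self[OF u_differentiable] dder_F2fld_self[OF u_differentiable noncharacteristic]
      by (simp add: dder_def linear_add linear_scale)
  qed
  moreover have "lie F1 F2 p = V - ?k *\<^sub>R F1 p - b p *\<^sub>R F2 p"
    by (simp add: V_def)
  ultimately show ?thesis
    by (simp add: algebra_simps)
qed

end

theorem lemma2p1:
  fixes U :: "pt set" and w X0 X1 X2 :: "pt \<Rightarrow> pt"
    and g :: "pt \<Rightarrow> pt \<Rightarrow> pt \<Rightarrow> real" and u :: "pt \<Rightarrow> real"
  assumes U_open: "open U"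
    and w_smooth: "smooth_vf U w"
    and contact: "\<forall>x\<in>U. wedge3 w x (axis 1 1) (axis 2 1) (axis 3 1) \<noteq> 0"
    and g_symm: "\<forall>x\<in>U. \<forall>a\<in>Dfib w x. \<forall>b\<in>Dfib w x. g x a b = g x b a"
    and g_add: "\<forall>x\<in>U. \<forall>a\<in>Dfib w x. \<forall>b\<in>Dfib w x. \<forall>c\<in>Dfib w x.
                   g x (a + b) c = g x a c + g x b c"
    and g_scal: "\<forall>x\<in>U. \<forall>a\<in>Dfib w x. \<forall>b\<in>Dfib w x. \<forall>r. g x (r *\<^sub>R a) b = r * g x a b"
    and g_pos: "\<forall>x\<in>U. \<forall>a\<in>Dfib w x. a \<noteq> 0 \<longrightarrow> g x a a > 0"
    and X0_smooth: "smooth_vf U X0"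
    and X1_smooth: "smooth_vf U X1"
    and X2_smooth: "smooth_vf U X2"
    and reeb1: "\<forall>x\<in>U. \<forall>v. dform w x (X0 x) v = 0"
    and reeb2: "\<forall>x\<in>U. w x \<bullet> X0 x = 1"
    and frame_D: "\<forall>x\<in>U. X1 x \<in> Dfib w x \<and> X2 x \<in> Dfib w x"
    and frame_on: "\<forall>x\<in>U. g x (X1 x) (X1 x) = 1 \<and> g x (X2 x) (X2 x) = 1 \<and> g x (X1 x) (X2 x) = 0"
    and dw_vol: "\<forall>x\<in>U. \<forall>a\<in>Dfib w x. \<forall>b\<in>Dfib w x. dform w x a b = - volg g X1 X2 x a b"
    and u_C2: "Ck_on 2 U u"
    and u_reg: "\<forall>x\<in>U. u x = 0 \<longrightarrow> frechet_derivative u (at x) \<noteq> (\<lambda>v. 0)"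
    and p_S: "p \<in> U" "u p = 0"
    and p_nGamma: "\<not> (dder X1 u p = 0 \<and> dder X2 u p = 0)"
  shows "lie (F1fld X1 X2 u) (F2fld X0 X1 X2 u) p =
           - (bfun X0 X1 X2 u p * hfun w g X0 (F1fld X1 X2 u) p + etafun g X0 (F1fld X1 X2 u) p)
               *\<^sub>R F1fld X1 X2 u p
           - bfun X0 X1 X2 u p *\<^sub>R F2fld X0 X1 X2 u p"
proof -
  interpret noncharacteristic_point U w X0 X1 X2 g u p
    using assms by unfold_locales (auto simp: smooth_vf_differentiable)
  show ?thesis
    by (rule lie_F1_F2)
qed

end
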